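(* Let $f\in C[0,1]$ satisfy $f(x)\neq0$ for all $x\in[0,1]$, and let $\alpha=\overline{\dim}_B G(f)$. Then for every $\beta\in[1,\alpha)$ there exist $g,h\in C[0,1]$ such that $$f=g\cdot h,\qquad \overline{\dim}_B G(g)=\alpha,\qquad \overline{\dim}_B G(h)=\beta.$$
   Context: $C[0,1]$ is the space of real-valued continuous functions on $[0,1]$; $G(h)=\{(x,h(x)):x\in[0,1]\}\subset\mathbb{R}^2$ is the graph of $h$; $g\cdot h$ is the pointwise product. For a nonempty bounded set $F$, $N_\delta(F)$ is the smallest number of sets of diameter at most $\delta$ covering $F$, and $\overline{\dim}_B F=\limsup_{\delta\to0}\frac{\log N_\delta(F)}{-\log\delta}$. *)

theory Defs
  imports "HOL-Analysis.Analysis"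
begin

definition graph01 :: "(real \<Rightarrow> real) \<Rightarrow> (real \<times> real) set" where
  "graph01 h = {(x, h x) | x. x \<in> {0..1}}"

definition cover_number :: "real \<Rightarrow> 'a::metric_space set \<Rightarrow> nat" where
  "cover_number \<delta> F = (LEAST n. \<exists>C. finite C \<and> card C = n \<and> F \<subseteq> \<Union>C \<and>
       (\<forall>S\<in>C. bounded S \<and> diameter S \<le> \<delta>))"

definition upper_box_dim :: "'a::metric_space set \<Rightarrow> ereal" where
  "upper_box_dim F = Limsup (at_right 0)
     (\<lambda>\<delta>. ereal (ln (real (cover_number \<delta> F)) / (- ln \<delta>)))"

end

theory Submission
  imports Defs
begin

text \<open>Cutting [0,1] into columns of width w, the number of sets of diameter 2w needed to cover the
  graph of u is comparable to 1/w plus the sum over the columns of the oscillation of u divided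
  by w. Oscillations behave subadditively: if |u x - u y| \<le> A |v x - v y| + B |t x - t y|, then the
  upper box dimension of the graph of u is at most the larger of those of v and t. For f = g h
  with h \<ge> 1 this applies to g = f / h and to f = g h, so dim G(g) \<le> max(dim G(f), dim G(h)) and
  dim G(f) \<le> max(dim G(g), dim G(h)); hence dim G(g) = dim G(f) whenever dim G(h) < dim G(f).
  Every continuous graph has dimension at most 2, so beta < 2. For beta = 1 take h = 1; otherwise
  take h = 1 + T with T x = sum_k 2^(-s k) tent(2^k x), s = 2 - beta: T is s-Hoelder, giving
  dim \<le> 2 - s, and its second differences on dyadic intervals of length 2^-n equal 2^(-s n), giving
  oscillation sums of size 2^(n(1-s)) and dim \<ge> 2 - s.\<close>

section \<open>Covering numbers and upper box dimension\<close>

lemma cover_number_le_card: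
  assumes "finite C" "F \<subseteq> \<Union>C" "\<And>S. S \<in> C \<Longrightarrow> bounded S \<and> diameter S \<le> \<delta>"
  shows "cover_number \<delta> F \<le> card C"
  unfolding cover_number_def using assms by (intro Least_le) blast

lemma cover_number_attained:
  assumes "finite C" "F \<subseteq> \<Union>C" "\<And>S. S \<in> C \<Longrightarrow> bounded S \<and> diameter S \<le> \<delta>"
  obtains D where "finite D" "card D = cover_number \<delta> F" "F \<subseteq> \<Union>D"
    "\<And>S. S \<in> D \<Longrightarrow> bounded S \<and> diameter S \<le> \<delta>"
proof -
  have "\<exists>n C. finite C \<and> card C = n \<and> F \<subseteq> \<Union>C \<and> (\<forall>S\<in>C. bounded S \<and> diameter S \<le> \<delta>)"
    using assms by blast
  from LeastI_ex[OF this] show ?thesis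
    using that unfolding cover_number_def by blast
qed

lemma interval_length_le_cover:
  fixes C :: "real set set"
  assumes "finite C" "{a..b} \<subseteq> \<Union>C" "\<And>S. S \<in> C \<Longrightarrow> bounded S \<and> diameter S \<le> d"
    and "a \<le> b" "0 \<le> d"
  shows "b - a \<le> 2 * d * card C"
proof -
  have "\<forall>S\<in>C. \<exists>c. S \<subseteq> {c - d..c + d}"
  proof
    fix S assume S: "S \<in> C"
    show "\<exists>c. S \<subseteq> {c - d..c + d}"
    proof (cases "S = {}")
      case False
      then obtain c where "c \<in> S" by blast
      then have "S \<subseteq> {c - d..c + d}"
        using diameter_bounded_bound[of S c] assms(3)[OF S] by (force simp: dist_real_def)
      then show ?thesis ..
    qed simp
  qed
  then obtain c where c: "\<And>S. S \<in> C \<Longrightarrow> S \<subseteq> {c S - d..c S + d}"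
    by metis
  have "b - a = measure lborel {a..b}" using assms(4) by simp
  also have "\<dots> \<le> measure lborel (\<Union>S\<in>C. {c S - d..c S + d})"
  proof (rule measure_mono_fmeasurable)
    show "{a..b} \<subseteq> (\<Union>S\<in>C. {c S - d..c S + d})" using assms(2) c by blast
    show "(\<Union>S\<in>C. {c S - d..c S + d}) \<in> fmeasurable lborel"
      using assms(1) by (intro fmeasurable_compact compact_UN) auto
  qed simp
  also have "\<dots> \<le> (\<Sum>S\<in>C. measure lborel {c S - d..c S + d})"
    using assms(1) by (intro measure_UNION_le) auto
  also have "\<dots> = (\<Sum>S\<in>C. 2 * d)" using assms(5) by simp
  finally show ?thesis by (simp add: mult.commute)
qed

lemma diameter_image_le_nonexpansive:
  fixes f :: "'a::metric_space \<Rightarrow> 'b::real_normed_vector"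
  assumes "bounded S" "\<And>p q. dist (f p) (f q) \<le> dist p q"
  shows "bounded (f ` S) \<and> diameter (f ` S) \<le> diameter S"
proof
  have dist_le: "dist x y \<le> diameter S" if xy: "x \<in> f ` S" "y \<in> f ` S" for x y
  proof -
    obtain p q where "p \<in> S" "q \<in> S" "x = f p" "y = f q" using xy by blast
    then show ?thesis using assms(2)[of p q] diameter_bounded_bound[OF assms(1)] by force
  qed
  then show "bounded (f ` S)" unfolding bounded_two_points by blast
  show "diameter (f ` S) \<le> diameter S"
    using diameter_ge_0[OF assms(1)] dist_le
    by (intro diameter_le) (auto simp: dist_norm)
qed

lemma Limsup_max_le:
  fixes f g :: "'a \<Rightarrow> 'b::complete_linorder"
  shows "Limsup F (\<lambda>x. max (f x) (g x)) \<le> max (Limsup F f) (Limsup F g)"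
  unfolding Limsup_le_iff
proof (intro allI impI)
  fix y assume "max (Limsup F f) (Limsup F g) < y"
  then have "\<forall>\<^sub>F x in F. f x < y" "\<forall>\<^sub>F x in F. g x < y"
    by (auto intro: Limsup_lessD)
  then show "\<forall>\<^sub>F x in F. max (f x) (g x) < y"
    by eventually_elim simp
qed

lemma Limsup_le_plus_vanishing:
  fixes e f g :: "'a \<Rightarrow> real"
  assumes "(e \<longlongrightarrow> 0) F" "\<forall>\<^sub>F x in F. f x \<le> e x + g x"
  shows "Limsup F (\<lambda>x. ereal (f x)) \<le> Limsup F (\<lambda>x. ereal (g x))"
  unfolding Limsup_le_iff
proof (intro allI impI)
  fix y assume y: "Limsup F (\<lambda>x. ereal (g x)) < y"
  then obtain z where z: "Limsup F (\<lambda>x. ereal (g x)) < z" "z < y"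
    using dense by blast
  then obtain r where r: "z = ereal r"
    by (cases z) auto
  have g: "\<forall>\<^sub>F x in F. g x < r" using Limsup_lessD[OF z(1)] unfolding r by simp
  show "\<forall>\<^sub>F x in F. ereal (f x) < y"
  proof (cases y)
    case (real r')
    then have "\<forall>\<^sub>F x in F. e x < r' - r"
      using z(2) r by (intro order_tendstoD(2)[OF assms(1)]) simp
    with assms(2) g show ?thesis
      by eventually_elim (simp add: real)
  qed (use y in auto)
qed

lemma tendsto_const_div_minus_ln: "((\<lambda>\<delta>. c / - ln \<delta>) \<longlongrightarrow> 0) (at_right (0::real))"
  using ln_at_0 filterlim_uminus_at_bot
  by (intro tendsto_divide_0[OF tendsto_const] filterlim_at_top_imp_at_infinity) blast

lemma eventually_at_right_0_lt_1: "\<forall>\<^sub>F \<delta> in at_right (0::real). 0 < \<delta> \<and> \<delta> < 1"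
  unfolding eventually_at_right_field by (intro exI[of _ 1]) auto

lemma upper_box_dim_le_power_bound:
  assumes "0 < C"
    and "\<forall>\<^sub>F \<delta> in at_right 0. 1 \<le> cover_number \<delta> F \<and> cover_number \<delta> F \<le> C * \<delta> powr - \<gamma>"
  shows "upper_box_dim F \<le> ereal \<gamma>"
proof -
  have "\<forall>\<^sub>F \<delta> in at_right 0. ln (cover_number \<delta> F) / - ln \<delta> \<le> ln C / - ln \<delta> + \<gamma>"
    using assms(2) eventually_at_right_0_lt_1
  proof eventually_elim
    case (elim \<delta>)
    then have "ln (cover_number \<delta> F) \<le> ln (C * \<delta> powr - \<gamma>)"
      using assms(1) by simp
    also have "\<dots> = ln C - \<gamma> * ln \<delta>"
      using assms(1) elim by (simp add: ln_mult ln_powr)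
    finally have "ln (cover_number \<delta> F) \<le> ln C - \<gamma> * ln \<delta>" .
    then show ?case using elim by (simp add: field_simps)
  qed
  then have "upper_box_dim F \<le> Limsup (at_right (0::real)) (\<lambda>_. ereal \<gamma>)"
    unfolding upper_box_dim_def
    by (rule Limsup_le_plus_vanishing[OF tendsto_const_div_minus_ln])
  then show ?thesis by (simp add: Limsup_const)
qed

lemma Limsup_filter_mono: "F \<le> G \<Longrightarrow> Limsup F f \<le> Limsup G f"
  unfolding Limsup_def by (intro INF_superset_mono) (auto intro: filter_leD)

lemma upper_box_dim_ge_sequence:
  assumes "0 < c" "\<And>n. 0 < d n" "d \<longlonglongrightarrow> 0"
    and "\<And>n. c * d n powr - \<gamma> \<le> cover_number (d n) F"
  shows "ereal \<gamma> \<le> upper_box_dim F"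
proof -
  define \<rho> where "\<rho> \<delta> = ereal (ln (cover_number \<delta> F) / - ln \<delta>)" for \<delta>
  have d: "filterlim d (at_right 0) sequentially"
    using assms(2,3) by (intro tendsto_imp_filterlim_at_right) auto
  have "((\<lambda>n. \<gamma> + ln c / - ln (d n)) \<longlongrightarrow> \<gamma> + 0) sequentially"
    by (intro tendsto_add tendsto_const filterlim_compose[OF tendsto_const_div_minus_ln d])
  then have "ereal \<gamma> = Limsup sequentially (\<lambda>n. ereal (\<gamma> + ln c / - ln (d n)))"
    by (intro lim_imp_Limsup[symmetric]) (auto intro: tendsto_ereal)
  also have "\<dots> \<le> Limsup sequentially (\<lambda>n. \<rho> (d n))"
  proof (intro Limsup_mono)
    show "\<forall>\<^sub>F n in sequentially. ereal (\<gamma> + ln c / - ln (d n)) \<le> \<rho> (d n)"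
      using order_tendstoD(2)[OF assms(3) zero_less_one]
    proof eventually_elim
      case (elim n)
      have "ln c - \<gamma> * ln (d n) = ln (c * d n powr - \<gamma>)"
        using assms(1) assms(2)[of n] by (simp add: ln_mult ln_powr)
      also have "\<dots> \<le> ln (cover_number (d n) F)"
        using assms(1) assms(4)[of n] assms(2)[of n] by (intro ln_mono) simp_all
      finally have "ln c - \<gamma> * ln (d n) \<le> ln (cover_number (d n) F)" .
      then have "(ln c - \<gamma> * ln (d n)) / - ln (d n) \<le> ln (cover_number (d n) F) / - ln (d n)"
        using elim assms(2)[of n] by (intro divide_right_mono) simp_all
      moreover have "(ln c - \<gamma> * ln (d n)) / - ln (d n) = \<gamma> + ln c / - ln (d n)"
        using elim assms(2)[of n] by (simp add: field_simps)
      ultimately show ?case unfolding \<rho>_def by simp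
    qed
  qed
  also have "\<dots> \<le> Limsup (filtermap d sequentially) \<rho>" by (rule Limsup_filtermap_ge)
  also have "\<dots> \<le> Limsup (at_right 0) \<rho>"
    using d by (intro Limsup_filter_mono) (simp add: filterlim_def)
  finally show ?thesis unfolding upper_box_dim_def \<rho>_def .
qed

lemma upper_box_dim_le_max:
  fixes K :: real and F F\<^sub>1 F\<^sub>2 :: "'a::metric_space set"
  assumes "0 < K"
    and "\<forall>\<^sub>F \<delta> in at_right 0. 1 \<le> cover_number \<delta> F \<and> 1 \<le> cover_number \<delta> F\<^sub>1 \<and> 1 \<le> cover_number \<delta> F\<^sub>2
          \<and> cover_number \<delta> F \<le> K * (cover_number \<delta> F\<^sub>1 + cover_number \<delta> F\<^sub>2)"
  shows "upper_box_dim F \<le> max (upper_box_dim F\<^sub>1) (upper_box_dim F\<^sub>2)"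
proof -
  define \<rho> where "\<rho> G \<delta> = ln (cover_number \<delta> G) / - ln \<delta>" for G :: "'a set" and \<delta> :: real
  have "\<forall>\<^sub>F \<delta> in at_right 0. \<rho> F \<delta> \<le> ln (2 * K) / - ln \<delta> + max (\<rho> F\<^sub>1 \<delta>) (\<rho> F\<^sub>2 \<delta>)"
    using assms(2) eventually_at_right_0_lt_1
  proof eventually_elim
    case (elim \<delta>)
    let ?N = "\<lambda>G. real (cover_number \<delta> G)"
    have "?N F \<le> K * (?N F\<^sub>1 + ?N F\<^sub>2)" using elim by simp
    also have "\<dots> \<le> K * (2 * max (?N F\<^sub>1) (?N F\<^sub>2))"
      using assms(1) by (intro mult_left_mono) auto
    finally have "ln (?N F) \<le> ln (2 * K * max (?N F\<^sub>1) (?N F\<^sub>2))"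
      using elim by (intro ln_mono) auto
    also have "\<dots> = ln (2 * K) + max (ln (?N F\<^sub>1)) (ln (?N F\<^sub>2))"
      using elim assms(1) by (simp add: ln_mult max_def)
    finally have "ln (?N F) / - ln \<delta> \<le> (ln (2 * K) + max (ln (?N F\<^sub>1)) (ln (?N F\<^sub>2))) / - ln \<delta>"
      using elim by (intro divide_right_mono) simp_all
    also have "\<dots> = ln (2 * K) / - ln \<delta> + max (\<rho> F\<^sub>1 \<delta>) (\<rho> F\<^sub>2 \<delta>)"
      using elim unfolding \<rho>_def by (simp only: add_divide_distrib max_divide_distrib_right) simp
    finally show ?case unfolding \<rho>_def .
  qed
  then have "upper_box_dim F \<le> Limsup (at_right (0::real)) (\<lambda>\<delta>. ereal (max (\<rho> F\<^sub>1 \<delta>) (\<rho> F\<^sub>2 \<delta>)))"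
    unfolding upper_box_dim_def \<rho>_def by (rule Limsup_le_plus_vanishing[OF tendsto_const_div_minus_ln])
  also have "\<dots> \<le> max (upper_box_dim F\<^sub>1) (upper_box_dim F\<^sub>2)"
    unfolding upper_box_dim_def \<rho>_def ereal_max by (rule Limsup_max_le)
  finally show ?thesis .
qed

section \<open>Oscillation sums of graphs\<close>

definition num_columns :: "real \<Rightarrow> nat" where
  "num_columns w = nat \<lfloor>1 / w\<rfloor> + 1"

definition column :: "real \<Rightarrow> nat \<Rightarrow> real set" where
  "column w i = {real i * w..(real i + 1) * w} \<inter> {0..1}"

definition oscillation_sum :: "(real \<Rightarrow> real) \<Rightarrow> real \<Rightarrow> real" where
  "oscillation_sum u w = (\<Sum>i<num_columns w. diameter (u ` column w i))"

abbreviation graph_cover_number :: "(real \<Rightarrow> real) \<Rightarrow> real \<Rightarrow> real" where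
  "graph_cover_number u \<delta> \<equiv> real (cover_number \<delta> (graph01 u))"

lemma num_columns_le: "0 < w \<Longrightarrow> real (num_columns w) \<le> 1 / w + 1"
  unfolding num_columns_def by simp

lemma column_subset: "column w i \<subseteq> {0..1}"
  unfolding column_def by auto

lemma compact_column: "compact (column w i)"
  unfolding column_def by auto

lemma connected_column: "connected (column w i)"
  unfolding column_def Int_atLeastAtMost by simp

lemma bounded_image_column: "continuous_on {0..1} u \<Longrightarrow> bounded (u ` column w i)"
  by (meson column_subset compact_column compact_continuous_image compact_imp_bounded
      continuous_on_subset)

lemma column_of_point:
  assumes "0 < w" "x \<in> {0..1}"
  shows "nat \<lfloor>x / w\<rfloor> < num_columns w" "x \<in> column w (nat \<lfloor>x / w\<rfloor>)"
proof -
  have "x / w \<le> 1 / w" using assms by (simp add: divide_right_mono)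
  then have "\<lfloor>x / w\<rfloor> \<le> \<lfloor>1 / w\<rfloor>" by (rule floor_mono)
  moreover have "0 \<le> \<lfloor>x / w\<rfloor>" using assms by simp
  ultimately show "nat \<lfloor>x / w\<rfloor> < num_columns w" unfolding num_columns_def by linarith
  have "real_of_int \<lfloor>x / w\<rfloor> * w \<le> x" "x < (real_of_int \<lfloor>x / w\<rfloor> + 1) * w"
    using assms by (metis floor_divide_lower, metis floor_divide_upper)
  then show "x \<in> column w (nat \<lfloor>x / w\<rfloor>)"
    using assms \<open>0 \<le> \<lfloor>x / w\<rfloor>\<close> unfolding column_def by auto
qed

lemma left_endpoint_in_column:
  assumes "0 < w" "i < num_columns w"
  shows "real i * w \<in> column w i"
proof -
  have "0 \<le> \<lfloor>1 / w\<rfloor>" using assms(1) by simp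
  then have "int i \<le> \<lfloor>1 / w\<rfloor>" using assms(2) unfolding num_columns_def by linarith
  then have "real i \<le> 1 / w" by (simp add: le_floor_iff)
  then show ?thesis using assms unfolding column_def by (auto simp: field_simps)
qed

lemma diameter_square_le:
  assumes "0 \<le> w"
  shows "diameter ({a..a + w} \<times> {b..b + w}) \<le> 2 * w"
proof (rule diameter_le)
  fix p q assume "p \<in> {a..a + w} \<times> {b..b + w}" "q \<in> {a..a + w} \<times> {b..b + w}"
  moreover obtain x1 y1 x2 y2 where "p = (x1, y1)" "q = (x2, y2)" by fastforce
  ultimately have "\<bar>x1 - x2\<bar> + \<bar>y1 - y2\<bar> \<le> 2 * w" "norm (p - q) = sqrt ((x1 - x2)\<^sup>2 + (y1 - y2)\<^sup>2)"
    by (auto simp: norm_Pair)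
  then show "norm (p - q) \<le> 2 * w" using sqrt_sum_squares_le_sum_abs by (metis order_trans)
qed (use assms in simp)

lemma interval_covered_by_stack:
  assumes "0 < w" "lo \<le> y" "y \<le> lo + D"
  obtains j :: nat where "j < nat \<lceil>D / w\<rceil> + 1" "y \<in> {lo + real j * w..lo + real j * w + w}"
proof
  define j where "j = nat \<lfloor>(y - lo) / w\<rfloor>"
  have "(y - lo) / w \<le> D / w" using assms by (simp add: divide_right_mono)
  then have "\<lfloor>(y - lo) / w\<rfloor> \<le> \<lceil>D / w\<rceil>" by (meson floor_le_ceiling floor_mono order_trans)
  moreover have "0 \<le> \<lfloor>(y - lo) / w\<rfloor>" using assms by simp
  ultimately show "j < nat \<lceil>D / w\<rceil> + 1" unfolding j_def by linarith
  have "real_of_int \<lfloor>(y - lo) / w\<rfloor> * w \<le> y - lo" "y - lo < (real_of_int \<lfloor>(y - lo) / w\<rfloor> + 1) * w"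
    using assms(1) by (metis floor_divide_lower, metis floor_divide_upper)
  then show "y \<in> {lo + real j * w..lo + real j * w + w}"
    unfolding j_def using \<open>0 \<le> \<lfloor>(y - lo) / w\<rfloor>\<close> by (auto simp: algebra_simps)
qed

text \<open>Over the i-th column the graph lies in a vertical strip of height twice the oscillation of u
  there, starting at u(i w) minus that oscillation; a stack of squares of side w covers it.\<close>
lemma graph_cover_by_squares:
  assumes u: "continuous_on {0..1} u" and w: "0 < w"
  obtains C where "finite C" "graph01 u \<subseteq> \<Union>C" "\<And>S. S \<in> C \<Longrightarrow> bounded S \<and> diameter S \<le> 2 * w"
    "real (card C) \<le> 2 * oscillation_sum u w / w + 2 * num_columns w"
proof -
  define D where "D i = diameter (u ` column w i)" for i
  define lo where "lo i = u (real i * w) - D i" for i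
  define k where "k i = nat \<lceil>2 * D i / w\<rceil> + 1" for i
  define R where "R ij = {real (fst ij) * w..real (fst ij) * w + w} \<times>
      {lo (fst ij) + real (snd ij) * w..lo (fst ij) + real (snd ij) * w + w}" for ij
  define I where "I = (SIGMA i:{..<num_columns w}. {..<k i})"
  have "finite I" unfolding I_def by auto
  have "graph01 u \<subseteq> \<Union>(R ` I)"
  proof
    fix p assume "p \<in> graph01 u"
    then obtain x where x: "p = (x, u x)" "x \<in> {0..1}" unfolding graph01_def by auto
    define i where "i = nat \<lfloor>x / w\<rfloor>"
    have i: "i < num_columns w" "x \<in> column w i" using column_of_point[OF w x(2)] i_def by auto
    have "dist (u x) (u (real i * w)) \<le> D i" unfolding D_def
      using left_endpoint_in_column[OF w i(1)] i(2)
      by (intro diameter_bounded_bound bounded_image_column[OF u]) auto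
    then have "lo i \<le> u x" "u x \<le> lo i + 2 * D i" unfolding lo_def dist_real_def by auto
    then obtain j where "j < k i" "u x \<in> {lo i + real j * w..lo i + real j * w + w}"
      unfolding k_def using interval_covered_by_stack[OF w] by blast
    moreover have "x \<in> {real i * w..real i * w + w}"
      using i(2) unfolding column_def by (auto simp: algebra_simps)
    ultimately have "p \<in> R (i, j)" "(i, j) \<in> I" unfolding R_def I_def x(1) using i by auto
    then show "p \<in> \<Union>(R ` I)" by auto
  qed
  moreover have "bounded S \<and> diameter S \<le> 2 * w" if "S \<in> R ` I" for S
    using that diameter_square_le w unfolding R_def by (auto intro!: bounded_Times)
  moreover have "real (card (R ` I)) \<le> 2 * oscillation_sum u w / w + 2 * num_columns w"
  proof -
    have "real (card (R ` I)) \<le> real (card I)"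
      using \<open>finite I\<close> by (simp add: card_image_le)
    also have "\<dots> = (\<Sum>i<num_columns w. real (k i))" unfolding I_def by simp
    also have "\<dots> \<le> (\<Sum>i<num_columns w. 2 * D i / w + 2)"
    proof (rule sum_mono)
      fix i
      have "0 \<le> 2 * D i / w"
        using w diameter_ge_0[OF bounded_image_column[OF u]] unfolding D_def by simp
      then have "real (nat \<lceil>2 * D i / w\<rceil>) \<le> 2 * D i / w + 1" by linarith
      then show "real (k i) \<le> 2 * D i / w + 2" unfolding k_def by simp
    qed
    also have "\<dots> = 2 * oscillation_sum u w / w + 2 * num_columns w"
      unfolding oscillation_sum_def D_def by (simp add: sum.distrib sum_divide_distrib sum_distrib_left)
    finally show ?thesis .
  qed
  ultimately show ?thesis using that \<open>finite I\<close> by (metis finite_imageI)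
qed

lemma card_columns_meeting_le:
  assumes "bounded S" "diameter S \<le> 2 * w" "0 < w"
  shows "card {i\<in>{..<n}. \<exists>p\<in>S. fst p \<in> column w i} \<le> 6"
proof (cases "S = {}")
  case False
  then obtain p0 where p0: "p0 \<in> S" by auto
  define a where "a = fst p0 / w - 3"
  have "{i\<in>{..<n}. \<exists>p\<in>S. fst p \<in> column w i} \<subseteq> {nat \<lceil>a\<rceil>..<nat \<lceil>a\<rceil> + 6}"
  proof
    fix i assume "i \<in> {i\<in>{..<n}. \<exists>p\<in>S. fst p \<in> column w i}"
    then obtain p where p: "p \<in> S" "fst p \<in> column w i" by auto
    have "dist (fst p) (fst p0) \<le> 2 * w"
      using dist_fst_le[of p p0] diameter_bounded_bound[OF assms(1) p(1) p0] assms(2) by linarith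
    moreover have "real i * w \<le> fst p" "fst p \<le> (real i + 1) * w"
      using p(2) unfolding column_def by auto
    moreover have "a * w = fst p0 - 3 * w" "(a + 5) * w = fst p0 + 2 * w"
      unfolding a_def using assms(3) by (simp_all add: field_simps)
    ultimately have "a * w \<le> real i * w" "real i * w \<le> (a + 5) * w"
      unfolding dist_real_def abs_le_iff by (auto simp: algebra_simps)
    then have "a \<le> real i" "real i \<le> a + 5" using assms(3) by simp_all
    then have "\<lceil>a\<rceil> \<le> int i" "int i \<le> \<lceil>a\<rceil> + 5" by linarith+
    then have "nat \<lceil>a\<rceil> \<le> i \<and> i < nat \<lceil>a\<rceil> + 6" by linarith
    then show "i \<in> {nat \<lceil>a\<rceil>..<nat \<lceil>a\<rceil> + 6}" by simp
  qed
  then have "card {i\<in>{..<n}. \<exists>p\<in>S. fst p \<in> column w i} \<le> card {nat \<lceil>a\<rceil>..<nat \<lceil>a\<rceil> + 6}"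
    by (intro card_mono) auto
  then show ?thesis by simp
qed simp

lemma cover_projections_small:
  fixes C :: "('a::real_normed_vector \<times> 'b::real_normed_vector) set set"
  assumes "\<And>S. S \<in> C \<Longrightarrow> bounded S \<and> diameter S \<le> \<delta>" "S \<in> C"
  shows "bounded (fst ` S) \<and> diameter (fst ` S) \<le> \<delta>" "bounded (snd ` S) \<and> diameter (snd ` S) \<le> \<delta>"
  using diameter_image_le_nonexpansive[of S fst] diameter_image_le_nonexpansive[of S snd]
    dist_fst_le dist_snd_le assms by (meson order_trans)+

lemma cover_card_ge:
  assumes "0 < w" "finite C" "graph01 u \<subseteq> \<Union>C" "\<And>S. S \<in> C \<Longrightarrow> bounded S \<and> diameter S \<le> 2 * w"
  shows "1 \<le> 4 * w * card C"
proof -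
  have "{0..1} \<subseteq> \<Union>((`) fst ` C)"
    using assms(3) unfolding graph01_def by force
  then have "1 - 0 \<le> 2 * (2 * w) * card ((`) fst ` C)"
    using assms cover_projections_small(1)[OF assms(4)] by (intro interval_length_le_cover) auto
  also have "\<dots> \<le> 2 * (2 * w) * card C"
    using assms(1,2) by (simp add: card_image_le)
  finally show ?thesis by simp
qed

text \<open>The y-projections of the sets meeting the column cover the range of u on it, an interval by
  connectedness.\<close>
lemma diameter_column_image_le_cover:
  assumes u: "continuous_on {0..1} u" and w: "0 < w" and i: "i < num_columns w" and "finite C"
    and cover: "graph01 u \<subseteq> \<Union>C" and small: "\<And>S. S \<in> C \<Longrightarrow> bounded S \<and> diameter S \<le> 2 * w"
  shows "diameter (u ` column w i) \<le> 4 * w * card {S\<in>C. \<exists>p\<in>S. fst p \<in> column w i}"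
proof -
  define C\<^sub>i where "C\<^sub>i = {S\<in>C. \<exists>p\<in>S. fst p \<in> column w i}"
  have ne: "column w i \<noteq> {}" using left_endpoint_in_column[OF w i] by auto
  have uc: "continuous_on (column w i) u" using u column_subset continuous_on_subset by blast
  obtain x\<^sub>1 x\<^sub>2 where x: "x\<^sub>1 \<in> column w i" "x\<^sub>2 \<in> column w i"
    "\<And>y. y \<in> column w i \<Longrightarrow> u x\<^sub>1 \<le> u y \<and> u y \<le> u x\<^sub>2"
    using continuous_attains_inf[OF compact_column ne uc] continuous_attains_sup[OF compact_column ne uc]
    by metis
  have "diameter (u ` column w i) \<le> u x\<^sub>2 - u x\<^sub>1"
  proof (rule diameter_le)
    fix a b assume "a \<in> u ` column w i" "b \<in> u ` column w i"
    then obtain y z where "y \<in> column w i" "z \<in> column w i" "a = u y" "b = u z" by blast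
    then show "norm (a - b) \<le> u x\<^sub>2 - u x\<^sub>1" using x(3)[of y] x(3)[of z] by auto
  qed (use ne in auto)
  also have "\<dots> \<le> 2 * (2 * w) * card ((`) snd ` C\<^sub>i)"
  proof (rule interval_length_le_cover)
    show "{u x\<^sub>1..u x\<^sub>2} \<subseteq> \<Union>((`) snd ` C\<^sub>i)"
    proof
      fix y assume "y \<in> {u x\<^sub>1..u x\<^sub>2}"
      then obtain x where x: "x \<in> column w i" "y = u x"
        using connected_contains_Icc[OF connected_continuous_image[OF uc connected_column]] x
        by blast
      then have "(x, y) \<in> graph01 u" using column_subset[of w i] unfolding graph01_def by auto
      then obtain S where "S \<in> C" "(x, y) \<in> S" using cover by auto
      then show "y \<in> \<Union>((`) snd ` C\<^sub>i)" unfolding C\<^sub>i_def using x by force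
    qed
  qed (use \<open>finite C\<close> cover_projections_small(2)[OF small] w x in \<open>auto simp: C\<^sub>i_def\<close>)
  also have "\<dots> \<le> 2 * (2 * w) * card C\<^sub>i"
    using w \<open>finite C\<close> unfolding C\<^sub>i_def by (simp add: card_image_le)
  finally show ?thesis unfolding C\<^sub>i_def by simp
qed

text \<open>Double counting: each set of the cover meets at most six columns.\<close>
lemma oscillation_sum_le_cover:
  assumes u: "continuous_on {0..1} u" and w: "0 < w" and "finite C"
    and cover: "graph01 u \<subseteq> \<Union>C" and small: "\<And>S. S \<in> C \<Longrightarrow> bounded S \<and> diameter S \<le> 2 * w"
  shows "oscillation_sum u w \<le> 24 * w * card C"
proof -
  define C\<^sub>i where "C\<^sub>i i = {S\<in>C. \<exists>p\<in>S. fst p \<in> column w i}" for i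
  have card_C\<^sub>i: "card (C\<^sub>i i) = (\<Sum>S\<in>C. if \<exists>p\<in>S. fst p \<in> column w i then 1 else 0)" for i
    unfolding C\<^sub>i_def using \<open>finite C\<close> by (simp add: sum.If_cases Int_def)
  have "(\<Sum>i<num_columns w. card (C\<^sub>i i))
      = (\<Sum>S\<in>C. \<Sum>i<num_columns w. if \<exists>p\<in>S. fst p \<in> column w i then 1 else 0)"
    unfolding card_C\<^sub>i by (rule sum.swap)
  also have "\<dots> = (\<Sum>S\<in>C. card {i\<in>{..<num_columns w}. \<exists>p\<in>S. fst p \<in> column w i})"
    by (simp add: sum.inter_filter[symmetric])
  also have "\<dots> \<le> (\<Sum>S\<in>C. 6)" by (intro sum_mono card_columns_meeting_le) (use small w in auto)
  finally have "real (\<Sum>i<num_columns w. card (C\<^sub>i i)) \<le> real (\<Sum>S\<in>C. 6)"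
    by (rule of_nat_mono)
  then have C\<^sub>i: "(\<Sum>i<num_columns w. real (card (C\<^sub>i i))) \<le> 6 * card C"
    by simp
  have "oscillation_sum u w \<le> (\<Sum>i<num_columns w. 4 * w * card (C\<^sub>i i))"
    unfolding oscillation_sum_def C\<^sub>i_def
    by (intro sum_mono diameter_column_image_le_cover[OF u w _ \<open>finite C\<close> cover small]) auto
  also have "\<dots> = 4 * w * (\<Sum>i<num_columns w. card (C\<^sub>i i))" by (simp add: sum_distrib_left)
  also have "\<dots> \<le> 4 * w * (6 * card C)"
    using C\<^sub>i w by (intro mult_left_mono) auto
  finally show ?thesis by simp
qed

lemma graph_cover_number_oscillation_bounds:
  assumes u: "continuous_on {0..1} u" and w: "0 < w"
  shows "oscillation_sum u w \<le> 24 * w * graph_cover_number u (2 * w)"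
    and "1 \<le> 4 * w * graph_cover_number u (2 * w)"
    and "graph_cover_number u (2 * w) \<le> 2 * oscillation_sum u w / w + 2 * num_columns w"
proof -
  obtain C where C: "finite C" "graph01 u \<subseteq> \<Union>C" "\<And>S. S \<in> C \<Longrightarrow> bounded S \<and> diameter S \<le> 2 * w"
    "real (card C) \<le> 2 * oscillation_sum u w / w + 2 * num_columns w"
    using graph_cover_by_squares[OF u w] by blast
  then show "graph_cover_number u (2 * w) \<le> 2 * oscillation_sum u w / w + 2 * num_columns w"
    using cover_number_le_card[OF C(1-3)] by (meson of_nat_le_iff order_trans)
  obtain D where "finite D" "card D = cover_number (2 * w) (graph01 u)" "graph01 u \<subseteq> \<Union>D"
    "\<And>S. S \<in> D \<Longrightarrow> bounded S \<and> diameter S \<le> 2 * w"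
    using cover_number_attained[OF C(1-3)] by blast
  then show "oscillation_sum u w \<le> 24 * w * graph_cover_number u (2 * w)"
    "1 \<le> 4 * w * graph_cover_number u (2 * w)"
    using oscillation_sum_le_cover[OF u w] cover_card_ge[OF w] by metis+
qed

lemma graph_cover_number_ge_1:
  assumes "continuous_on {0..1} u" "0 < \<delta>"
  shows "1 \<le> graph_cover_number u \<delta>"
proof -
  have "1 \<le> 4 * (\<delta> / 2) * graph_cover_number u (2 * (\<delta> / 2))"
    using assms by (intro graph_cover_number_oscillation_bounds(2)) auto
  then show ?thesis by (cases "cover_number \<delta> (graph01 u)") auto
qed

lemma oscillation_sum_le_comb:
  assumes v: "continuous_on {0..1} v" and t: "continuous_on {0..1} t" and "0 \<le> A" "0 \<le> B"
    and comb: "\<And>x y. x \<in> {0..1} \<Longrightarrow> y \<in> {0..1} \<Longrightarrow> \<bar>u x - u y\<bar> \<le> A * \<bar>v x - v y\<bar> + B * \<bar>t x - t y\<bar>"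
  shows "oscillation_sum u w \<le> A * oscillation_sum v w + B * oscillation_sum t w"
proof -
  have "diameter (u ` column w i) \<le> A * diameter (v ` column w i) + B * diameter (t ` column w i)" for i
  proof (rule diameter_le)
    fix a b assume "a \<in> u ` column w i" "b \<in> u ` column w i"
    then obtain x y where xy: "x \<in> column w i" "y \<in> column w i" "a = u x" "b = u y" by auto
    have "\<bar>v x - v y\<bar> \<le> diameter (v ` column w i)" "\<bar>t x - t y\<bar> \<le> diameter (t ` column w i)"
      using diameter_bounded_bound[OF bounded_image_column[OF v], of "v x" w i "v y"]
        diameter_bounded_bound[OF bounded_image_column[OF t], of "t x" w i "t y"] xy
      by (simp_all add: dist_real_def)
    then have "A * \<bar>v x - v y\<bar> + B * \<bar>t x - t y\<bar> \<le> A * diameter (v ` column w i) + B * diameter (t ` column w i)"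
      using assms(3,4) by (intro add_mono mult_left_mono)
    moreover have "\<bar>u x - u y\<bar> \<le> A * \<bar>v x - v y\<bar> + B * \<bar>t x - t y\<bar>"
      using comb xy column_subset by blast
    ultimately show "norm (a - b) \<le> A * diameter (v ` column w i) + B * diameter (t ` column w i)"
      using xy by simp
  qed (use assms(3,4) diameter_ge_0[OF bounded_image_column[OF v]]
        diameter_ge_0[OF bounded_image_column[OF t]] in simp)
  then show ?thesis unfolding oscillation_sum_def
    by (simp add: sum_distrib_left sum.distrib[symmetric] sum_mono)
qed

lemma graph_cover_number_le_comb:
  assumes u: "continuous_on {0..1} u" and v: "continuous_on {0..1} v" and t: "continuous_on {0..1} t"
    and A: "0 \<le> A" and B: "0 \<le> B"
    and comb: "\<And>x y. x \<in> {0..1} \<Longrightarrow> y \<in> {0..1} \<Longrightarrow> \<bar>u x - u y\<bar> \<le> A * \<bar>v x - v y\<bar> + B * \<bar>t x - t y\<bar>"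
    and w: "0 < w" "w \<le> 1"
  shows "graph_cover_number u (2 * w)
    \<le> (48 * (A + B) + 16) * (graph_cover_number v (2 * w) + graph_cover_number t (2 * w))"
proof -
  let ?Nv = "graph_cover_number v (2 * w)" and ?Nt = "graph_cover_number t (2 * w)"
  note bounds = graph_cover_number_oscillation_bounds[OF _ w(1)]
  have "oscillation_sum u w / w \<le> (A * oscillation_sum v w + B * oscillation_sum t w) / w"
    using oscillation_sum_le_comb[OF v t A B comb] w by (simp add: divide_right_mono)
  also have "\<dots> = A * (oscillation_sum v w / w) + B * (oscillation_sum t w / w)"
    by (simp add: add_divide_distrib)
  also have "\<dots> \<le> A * (24 * ?Nv) + B * (24 * ?Nt)"
    using bounds(1)[OF v] bounds(1)[OF t] w A B
    by (intro add_mono mult_left_mono) (simp_all add: divide_le_eq algebra_simps)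
  finally have osc: "2 * oscillation_sum u w / w \<le> 48 * A * ?Nv + 48 * B * ?Nt" by simp
  have "2 * real (num_columns w) \<le> 4 / w"
    using num_columns_le[OF w(1)] w by (simp add: field_simps)
  also have "\<dots> \<le> 16 * ?Nv" using bounds(2)[OF v] w by (simp add: divide_le_eq algebra_simps)
  finally have "graph_cover_number u (2 * w) \<le> 48 * A * ?Nv + 48 * B * ?Nt + 16 * ?Nv"
    using bounds(3)[OF u] osc by linarith
  also have "\<dots> \<le> (48 * (A + B) + 16) * (?Nv + ?Nt)"
    using A B by (simp add: algebra_simps)
  finally show ?thesis .
qed

lemma upper_box_dim_graph_le_max:
  assumes "continuous_on {0..1} u" "continuous_on {0..1} v" "continuous_on {0..1} t"
    and "0 \<le> A" "0 \<le> B"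
    and "\<And>x y. x \<in> {0..1} \<Longrightarrow> y \<in> {0..1} \<Longrightarrow> \<bar>u x - u y\<bar> \<le> A * \<bar>v x - v y\<bar> + B * \<bar>t x - t y\<bar>"
  shows "upper_box_dim (graph01 u) \<le> max (upper_box_dim (graph01 v)) (upper_box_dim (graph01 t))"
proof (rule upper_box_dim_le_max)
  show "0 < 48 * (A + B) + 16" using assms(4,5) by simp
  show "\<forall>\<^sub>F \<delta> in at_right 0. 1 \<le> cover_number \<delta> (graph01 u) \<and> 1 \<le> cover_number \<delta> (graph01 v)
      \<and> 1 \<le> cover_number \<delta> (graph01 t)
      \<and> graph_cover_number u \<delta> \<le> (48 * (A + B) + 16) * real (cover_number \<delta> (graph01 v) + cover_number \<delta> (graph01 t))"
    unfolding eventually_at_right_field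
  proof (intro exI[of _ 1] conjI allI impI)
    fix \<delta> :: real assume \<delta>: "0 < \<delta>" "\<delta> < 1"
    then show "1 \<le> cover_number \<delta> (graph01 u)" "1 \<le> cover_number \<delta> (graph01 v)"
      "1 \<le> cover_number \<delta> (graph01 t)"
      using graph_cover_number_ge_1 assms(1-3) by force+
    show "graph_cover_number u \<delta>
      \<le> (48 * (A + B) + 16) * real (cover_number \<delta> (graph01 v) + cover_number \<delta> (graph01 t))"
      using graph_cover_number_le_comb[OF assms, of "\<delta> / 2"] \<delta> by simp
  qed simp
qed

lemma upper_box_dim_graph_ge_1:
  assumes "continuous_on {0..1} u"
  shows "1 \<le> upper_box_dim (graph01 u)"
proof -
  have "ereal 1 \<le> upper_box_dim (graph01 u)"
  proof (rule upper_box_dim_ge_sequence[of "1 / 2" "\<lambda>n. inverse (real (Suc n))"])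
    fix n :: nat
    define d where "d = inverse (real (Suc n))"
    have d: "0 < d" unfolding d_def by simp
    have "1 \<le> 4 * (d / 2) * graph_cover_number u (2 * (d / 2))"
      using assms d by (intro graph_cover_number_oscillation_bounds(2)) simp_all
    then show "1 / 2 * d powr - 1 \<le> graph_cover_number u d"
      using d by (simp add: powr_minus_divide field_simps)
  next
    show "(\<lambda>n. inverse (real (Suc n))) \<longlonglongrightarrow> 0" by (rule LIMSEQ_inverse_real_of_nat)
  qed simp_all
  then show ?thesis by (simp add: one_ereal_def)
qed

lemma oscillation_sum_holder_le:
  assumes "0 < w" "0 \<le> s" "0 \<le> C"
    and holder: "\<And>x y. x \<in> {0..1} \<Longrightarrow> y \<in> {0..1} \<Longrightarrow> \<bar>u x - u y\<bar> \<le> C * \<bar>x - y\<bar> powr s"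
  shows "oscillation_sum u w \<le> num_columns w * (C * w powr s)"
proof -
  have "diameter (u ` column w i) \<le> C * w powr s" for i
  proof (rule diameter_le)
    fix a b assume "a \<in> u ` column w i" "b \<in> u ` column w i"
    then obtain x y where xy: "x \<in> column w i" "y \<in> column w i" "a = u x" "b = u y" by auto
    then have "\<bar>x - y\<bar> \<le> w" unfolding column_def by (auto simp: algebra_simps abs_le_iff)
    then have "\<bar>x - y\<bar> powr s \<le> w powr s" using assms(2) by (intro powr_mono2) auto
    moreover have "\<bar>u x - u y\<bar> \<le> C * \<bar>x - y\<bar> powr s" using holder xy column_subset by blast
    ultimately show "norm (a - b) \<le> C * w powr s" using xy assms(3) by (simp add: order_trans mult_left_mono)
  qed (use assms(3) in simp)
  then show ?thesis unfolding oscillation_sum_def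
    using sum_mono[of "{..<num_columns w}" "\<lambda>i. diameter (u ` column w i)" "\<lambda>i. C * w powr s"] by simp
qed

lemma graph_cover_number_holder_le:
  assumes u: "continuous_on {0..1} u" and s: "0 \<le> s" "s \<le> 1" and C: "0 \<le> C"
    and holder: "\<And>x y. x \<in> {0..1} \<Longrightarrow> y \<in> {0..1} \<Longrightarrow> \<bar>u x - u y\<bar> \<le> C * \<bar>x - y\<bar> powr s"
    and \<delta>: "0 < \<delta>" "\<delta> < 1"
  shows "graph_cover_number u \<delta> \<le> 16 * (C + 1) * \<delta> powr - (2 - s)"
proof -
  define w where "w = \<delta> / 2"
  have w: "0 < w" "w \<le> 1" using \<delta> unfolding w_def by auto
  define Y where "Y = w powr (s - 1)"
  have "1 \<le> Y"
  proof -
    have "w powr (1 - s) \<le> 1" "0 < w powr (1 - s)" using w s by (auto intro: powr_le1)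
    moreover have "Y = 1 / w powr (1 - s)" unfolding Y_def by (simp add: powr_minus_divide[symmetric])
    ultimately show ?thesis by simp
  qed
  have wY: "w powr s / w = Y" unfolding Y_def using w by (simp add: powr_diff)
  have Yw: "Y / w = 2 powr (2 - s) * \<delta> powr (s - 2)"
  proof -
    have "Y / w = w powr (s - 2)" unfolding Y_def using w by (simp add: powr_diff power2_eq_square)
    also have "\<dots> = 2 powr (2 - s) * \<delta> powr (s - 2)"
      unfolding w_def using \<delta> by (simp add: powr_divide powr_diff powr_minus_divide)
    finally show ?thesis .
  qed
  have "graph_cover_number u \<delta> \<le> 2 * oscillation_sum u w / w + 2 * num_columns w"
    using graph_cover_number_oscillation_bounds(3)[OF u w(1)] unfolding w_def by simp
  also have "\<dots> \<le> 2 * (num_columns w * (C * w powr s)) / w + 2 * num_columns w"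
    using oscillation_sum_holder_le[OF w(1) s(1) C holder] w by (simp add: divide_right_mono)
  also have "\<dots> = 2 * num_columns w * (C * Y + 1)"
    using w unfolding wY[symmetric] by (simp add: field_simps)
  also have "\<dots> \<le> 2 * (2 / w) * ((C + 1) * Y)"
    using num_columns_le[OF w(1)] w C \<open>1 \<le> Y\<close>
    by (intro mult_mono) (auto simp: field_simps)
  also have "\<dots> = 4 * (C + 1) * (2 powr (2 - s) * \<delta> powr (s - 2))"
    unfolding Yw[symmetric] by (simp add: field_simps)
  also have "\<dots> \<le> 4 * (C + 1) * (4 * \<delta> powr (s - 2))"
    using C s powr_mono[of "2 - s" 2 2] by (intro mult_left_mono mult_right_mono) auto
  also have "\<dots> = 16 * (C + 1) * \<delta> powr - (2 - s)" by simp
  finally show ?thesis .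
qed

lemma upper_box_dim_graph_holder:
  assumes u: "continuous_on {0..1} u" and s: "0 \<le> s" "s \<le> 1" and C: "0 \<le> C"
    and holder: "\<And>x y. x \<in> {0..1} \<Longrightarrow> y \<in> {0..1} \<Longrightarrow> \<bar>u x - u y\<bar> \<le> C * \<bar>x - y\<bar> powr s"
  shows "upper_box_dim (graph01 u) \<le> ereal (2 - s)"
proof (rule upper_box_dim_le_power_bound[of "16 * (C + 1)"])
  show "0 < 16 * (C + 1)" using C by simp
  show "\<forall>\<^sub>F \<delta> in at_right 0. 1 \<le> cover_number \<delta> (graph01 u)
      \<and> graph_cover_number u \<delta> \<le> 16 * (C + 1) * \<delta> powr - (2 - s)"
    using eventually_at_right_0_lt_1
    by eventually_elim (use graph_cover_number_ge_1[OF u] graph_cover_number_holder_le[OF assms] in auto)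
qed

section \<open>The Takagi function\<close>

text \<open>The distance to the nearest half-integer, i.e. 1/2 minus the distance to the nearest integer;
  so takagi below is, up to sign and an additive constant, the classical Takagi-Weierstrass
  function with ratio 2 powr -s.\<close>
definition tent :: "real \<Rightarrow> real" where
  "tent t = \<bar>frac t - 1 / 2\<bar>"

lemma tent_bounds: "0 \<le> tent t" "tent t \<le> 1 / 2"
  using frac_ge_0[of t] frac_lt_1[of t] unfolding tent_def by (auto simp: abs_if)

lemma tent_eq: "tent t = \<bar>t - real_of_int \<lfloor>t\<rfloor> - 1 / 2\<bar>"
  unfolding tent_def frac_def by simp

lemma tent_le: "tent t \<le> \<bar>t - real_of_int n - 1 / 2\<bar>"
proof -
  define m where "m = \<lfloor>t\<rfloor> - n"
  have t: "t - real_of_int n - 1 / 2 = real_of_int m + (frac t - 1 / 2)"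
    unfolding m_def by (simp add: frac_def)
  have "0 \<le> frac t" "frac t < 1" by (simp_all add: frac_lt_1)
  then consider "m = 0" | "1 \<le> real_of_int m" "1 / 2 \<le> real_of_int m + (frac t - 1 / 2)"
    | "real_of_int m \<le> - 1" "real_of_int m + (frac t - 1 / 2) \<le> - 1 / 2"
    by linarith
  then show ?thesis
  proof cases
    case 1
    then show ?thesis unfolding t tent_def by simp
  next
    case 2
    then show ?thesis using tent_bounds(2)[of t] unfolding t by linarith
  next
    case 3
    then show ?thesis using tent_bounds(2)[of t] unfolding t by linarith
  qed
qed

lemma tent_lipschitz: "\<bar>tent x - tent y\<bar> \<le> \<bar>x - y\<bar>"
  using tent_le[of x "\<lfloor>y\<rfloor>"] tent_le[of y "\<lfloor>x\<rfloor>"] unfolding tent_eq[of x] tent_eq[of y] by linarith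

lemma tent_on_unit_interval:
  assumes "t \<in> {real_of_int r..real_of_int r + 1}"
  shows "tent t = \<bar>t - real_of_int r - 1 / 2\<bar>"
proof (cases "t = real_of_int r + 1")
  case True
  then show ?thesis by (simp add: tent_def)
next
  case False
  then have "\<lfloor>t\<rfloor> = r" using assms by (intro floor_unique) auto
  then show ?thesis by (simp add: tent_eq)
qed

lemma tent_of_nat [simp]: "tent (real n) = 1 / 2"
  unfolding tent_def frac_def by simp

lemma tent_half_integer: "tent (real_of_int r + 1 / 2) = 0"
  using tent_on_unit_interval[of "real_of_int r + 1 / 2" r] by simp

lemma tent_affine_on_half_interval:
  assumes "t \<in> {real_of_int Q / 2..(real_of_int Q + 1) / 2}"
  shows "tent t = (if even Q then (real_of_int Q + 1) / 2 - t else t - real_of_int Q / 2)"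
proof (cases "even Q")
  case True
  then obtain r where Q: "Q = 2 * r" by (auto elim: evenE)
  have "t \<in> {real_of_int r..real_of_int r + 1}" using assms Q by auto
  from tent_on_unit_interval[OF this] show ?thesis using assms Q True by auto
next
  case False
  then obtain r where Q: "Q = 2 * r + 1" by (auto elim: oddE)
  have "t \<in> {real_of_int r..real_of_int r + 1}" using assms Q by auto
  from tent_on_unit_interval[OF this] show ?thesis using assms Q False by (auto simp: field_simps)
qed

lemma tent_midpoint:
  assumes "a \<in> {real_of_int Q / 2..(real_of_int Q + 1) / 2}" "b \<in> {real_of_int Q / 2..(real_of_int Q + 1) / 2}"
  shows "tent ((a + b) / 2) = (tent a + tent b) / 2"
proof -
  have "(a + b) / 2 \<in> {real_of_int Q / 2..(real_of_int Q + 1) / 2}" using assms by auto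
  then show ?thesis
    using tent_affine_on_half_interval[OF assms(1)] tent_affine_on_half_interval[OF assms(2)]
      tent_affine_on_half_interval[of "(a + b) / 2"] by (auto simp: field_simps)
qed

text \<open>On the dyadic interval [j/2^n, (j+1)/2^n] only the n-th term of the Takagi series has a
  nonzero second difference: coarser terms are affine there, finer ones take the value 1/2 at all
  three points.\<close>
lemma tent_dyadic_second_difference:
  fixes j n k :: nat
  shows "tent (2 ^ k * (real j / 2 ^ n)) + tent (2 ^ k * ((real j + 1) / 2 ^ n))
      - 2 * tent (2 ^ k * ((2 * real j + 1) / 2 ^ (n + 1))) = (if k = n then 1 else 0)"
proof (cases n k rule: linorder_cases)
  case less
  then obtain e where e: "k = n + 1 + e" by (auto dest: less_imp_Suc_add)
  have "2 ^ k * (real j / 2 ^ n) = real (j * 2 ^ (e + 1))"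
    "2 ^ k * ((real j + 1) / 2 ^ n) = real ((j + 1) * 2 ^ (e + 1))"
    "2 ^ k * ((2 * real j + 1) / 2 ^ (n + 1)) = real ((2 * j + 1) * 2 ^ e)"
    unfolding e by (simp_all add: power_add field_simps)
  then show ?thesis using less by (simp only: tent_of_nat) simp
next
  case equal
  have "2 ^ k * (real j / 2 ^ n) = real j" "2 ^ k * ((real j + 1) / 2 ^ n) = real (j + 1)"
    "2 ^ k * ((2 * real j + 1) / 2 ^ (n + 1)) = real_of_int (int j) + 1 / 2"
    using equal by (simp_all add: field_simps)
  then show ?thesis using equal by (simp only: tent_of_nat tent_half_integer) simp
next
  case greater
  then obtain p where p: "n = k + p + 1" by (auto dest: less_imp_Suc_add)
  define Q where "Q = j div 2 ^ p"
  define r where "r = j mod 2 ^ p"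
  have "j = Q * 2 ^ p + r" unfolding Q_def r_def by (metis div_mult_mod_eq)
  then have j: "real j = real Q * 2 ^ p + real r" by simp
  have "r + 1 \<le> 2 ^ p" unfolding r_def by (simp add: Suc_le_eq)
  then have "real (r + 1) \<le> real (2 ^ p)" by (simp only: of_nat_le_iff)
  then have "real r + 1 \<le> 2 ^ p" by simp
  then have r: "(real r + 1) / 2 ^ (p + 1) \<le> 1 / 2" by (simp add: field_simps)
  have e: "real j / 2 ^ (p + 1) = real Q / 2 + real r / 2 ^ (p + 1)"
    "(real j + 1) / 2 ^ (p + 1) = real Q / 2 + (real r + 1) / 2 ^ (p + 1)"
    unfolding j by (simp_all add: field_simps)
  have "0 \<le> real r / 2 ^ (p + 1)" "real r / 2 ^ (p + 1) \<le> (real r + 1) / 2 ^ (p + 1)"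
    by (simp_all add: divide_right_mono)
  moreover have Q: "real_of_int (int Q) / 2 = real Q / 2" "(real_of_int (int Q) + 1) / 2 = real Q / 2 + 1 / 2"
    by simp_all
  ultimately have "real j / 2 ^ (p + 1) \<in> {real_of_int (int Q) / 2..(real_of_int (int Q) + 1) / 2}"
    "(real j + 1) / 2 ^ (p + 1) \<in> {real_of_int (int Q) / 2..(real_of_int (int Q) + 1) / 2}"
    unfolding atLeastAtMost_iff e Q using r by linarith+
  note mid = tent_midpoint[OF this]
  have "2 ^ k * (real j / 2 ^ n) = real j / 2 ^ (p + 1)"
    "2 ^ k * ((real j + 1) / 2 ^ n) = (real j + 1) / 2 ^ (p + 1)"
    "2 ^ k * ((2 * real j + 1) / 2 ^ (n + 1)) = (real j / 2 ^ (p + 1) + (real j + 1) / 2 ^ (p + 1)) / 2"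
    unfolding p by (simp_all add: power_add field_simps)
  then show ?thesis unfolding mid using greater by (simp only: mid) simp
qed

definition takagi :: "real \<Rightarrow> real \<Rightarrow> real" where
  "takagi s x = (\<Sum>k. (2 powr - s) ^ k * tent (2 ^ k * x))"

lemma takagi_ratio_bounds:
  assumes "0 < s" "s < 1"
  shows "0 < (2::real) powr - s" "(2::real) powr - s < 1" "1 < 2 * (2::real) powr - s"
proof -
  show "0 < (2::real) powr - s" by simp
  show "(2::real) powr - s < 1" using assms by (simp add: powr_less_one)
  have "2 * (2::real) powr - s = 2 powr (1 - s)" by (simp add: powr_diff powr_minus_divide)
  then show "1 < 2 * (2::real) powr - s" using assms by (simp add: gr_one_powr)
qed

lemma summable_takagi:
  assumes "0 < s" "s < 1"
  shows "summable (\<lambda>k. (2 powr - s) ^ k * tent (2 ^ k * x))"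
proof (rule summable_comparison_test'[where N = 0])
  show "summable (\<lambda>k. ((2::real) powr - s) ^ k)"
    using takagi_ratio_bounds[OF assms] by (intro summable_geometric) simp
  show "norm ((2 powr - s) ^ k * tent (2 ^ k * x)) \<le> (2 powr - s) ^ k" for k
    using tent_bounds[of "2 ^ k * x"] takagi_ratio_bounds[OF assms] by (simp add: mult_left_le)
qed

lemma takagi_nonneg: "0 < s \<Longrightarrow> s < 1 \<Longrightarrow> 0 \<le> takagi s x"
  unfolding takagi_def using tent_bounds by (intro suminf_nonneg summable_takagi) auto

lemma exists_dyadic_scale:
  fixes d :: real
  assumes "0 < d" "d \<le> 1"
  obtains N :: nat where "2 ^ N * d \<le> 1" "1 < 2 ^ (N + 1) * d"
proof -
  have ex: "\<exists>n. 1 < (2::real) ^ n * d"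
    using real_arch_pow[of 2 "1 / d"] assms by (auto simp: field_simps)
  define M where "M = (LEAST n. 1 < (2::real) ^ n * d)"
  have M: "1 < (2::real) ^ M * d" unfolding M_def by (rule LeastI_ex[OF ex])
  then obtain N where N: "M = N + 1" using assms by (cases M) auto
  have "N < M" using N by simp
  then have "\<not> 1 < (2::real) ^ N * d"
    using not_less_Least[of N "\<lambda>n. 1 < (2::real) ^ n * d"] unfolding M_def by blast
  then show ?thesis using M N by (intro that[of N]) simp_all
qed

text \<open>Split the series at the scale N: below it use the bound 2^k d, above it the bound 1; both
  parts are geometric sums of size q^N.\<close>
lemma suminf_geometric_min_le:
  fixes q d :: real
  assumes q: "0 < q" "q < 1" "1 < 2 * q" and d: "0 < d" "2 ^ N * d \<le> 1"
  shows "summable (\<lambda>k. q ^ k * min (2 ^ k * d) 1)"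
    and "(\<Sum>k. q ^ k * min (2 ^ k * d) 1) \<le> q ^ N * (1 / (2 * q - 1) + 1 / (1 - q))"
proof -
  define b where "b k = q ^ k * min (2 ^ k * d) 1" for k
  show sb: "summable b" unfolding b_def
    using q d by (intro summable_comparison_test'[where N = 0, OF summable_geometric[of q]])
      (auto simp: abs_mult mult_left_le)
  have "(\<Sum>k<N. (2 * q) ^ k) = (1 - (2 * q) ^ N) / (1 - 2 * q)"
    using q sum_gp_strict[of "2 * q" N] by simp
  also have "\<dots> = ((2 * q) ^ N - 1) / (2 * q - 1)" by (metis minus_diff_eq minus_divide_divide)
  finally have gp: "(\<Sum>k<N. (2 * q) ^ k) = ((2 * q) ^ N - 1) / (2 * q - 1)" .
  have "(\<Sum>k<N. b k) \<le> (\<Sum>k<N. (2 * q) ^ k * d)"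
    unfolding b_def by (intro sum_mono) (use q in \<open>auto simp: power_mult_distrib\<close>)
  also have "\<dots> = ((2 * q) ^ N - 1) / (2 * q - 1) * d" by (simp only: sum_distrib_right[symmetric] gp)
  also have "\<dots> \<le> (2 * q) ^ N / (2 * q - 1) * d" using q d by (intro mult_right_mono divide_right_mono) auto
  also have "\<dots> = (2 ^ N * d) * q ^ N / (2 * q - 1)" by (simp add: power_mult_distrib)
  also have "\<dots> \<le> q ^ N / (2 * q - 1)"
    using d q by (intro divide_right_mono mult_left_le_one_le) auto
  finally have head: "(\<Sum>k<N. b k) \<le> q ^ N / (2 * q - 1)" .
  have "(\<Sum>k. b (k + N)) \<le> (\<Sum>k. q ^ N * q ^ k)"
  proof (rule suminf_le)
    show "b (k + N) \<le> q ^ N * q ^ k" for k unfolding b_def using q by (simp add: power_add mult_left_le)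
    show "summable (\<lambda>k. b (k + N))" using sb by (simp add: summable_iff_shift)
    show "summable (\<lambda>k. q ^ N * q ^ k)" using q by (intro summable_mult summable_geometric) simp
  qed
  also have "\<dots> = q ^ N / (1 - q)" using q by (simp add: suminf_mult suminf_geometric)
  finally have tail: "(\<Sum>k. b (k + N)) \<le> q ^ N / (1 - q)" .
  have "suminf b = (\<Sum>k. b (k + N)) + (\<Sum>k<N. b k)" by (rule suminf_split_initial_segment[OF sb])
  also have "\<dots> \<le> q ^ N * (1 / (2 * q - 1) + 1 / (1 - q))"
    using head tail by (simp add: field_simps)
  finally show "(\<Sum>k. q ^ k * min (2 ^ k * d) 1) \<le> q ^ N * (1 / (2 * q - 1) + 1 / (1 - q))"
    unfolding b_def .
qed

lemma takagi_holder:
  assumes s: "0 < s" "s < 1"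
  obtains C where "0 \<le> C" "\<And>x y. \<bar>x - y\<bar> \<le> 1 \<Longrightarrow> \<bar>takagi s x - takagi s y\<bar> \<le> C * \<bar>x - y\<bar> powr s"
proof
  define q :: real where "q = 2 powr - s"
  have q: "0 < q" "q < 1" "1 < 2 * q" using takagi_ratio_bounds[OF s] unfolding q_def by auto
  define C where "C = 2 powr s * (1 / (2 * q - 1) + 1 / (1 - q))"
  show "0 \<le> C" unfolding C_def using q by simp
  fix x y :: real assume xy: "\<bar>x - y\<bar> \<le> 1"
  show "\<bar>takagi s x - takagi s y\<bar> \<le> C * \<bar>x - y\<bar> powr s"
  proof (cases "x = y")
    case False
    define d where "d = \<bar>x - y\<bar>"
    have d: "0 < d" "d \<le> 1" using False xy unfolding d_def by auto
    obtain N where N: "2 ^ N * d \<le> 1" "1 < 2 ^ (N + 1) * d" using exists_dyadic_scale[OF d] .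
    define a where "a k = q ^ k * (tent (2 ^ k * x) - tent (2 ^ k * y))" for k
    define b where "b k = q ^ k * min (2 ^ k * d) 1" for k
    have ab: "\<bar>a k\<bar> \<le> b k" for k
    proof -
      have "\<bar>tent (2 ^ k * x) - tent (2 ^ k * y)\<bar> \<le> 2 ^ k * d"
        using tent_lipschitz[of "2 ^ k * x" "2 ^ k * y"] unfolding d_def
        by (simp add: abs_mult flip: right_diff_distrib)
      moreover have "\<bar>tent (2 ^ k * x) - tent (2 ^ k * y)\<bar> \<le> 1"
        using tent_bounds[of "2 ^ k * x"] tent_bounds[of "2 ^ k * y"] by auto
      ultimately show ?thesis unfolding a_def b_def using q by (simp add: abs_mult mult_left_mono)
    qed
    note sb = suminf_geometric_min_le[OF q d(1) N(1), folded b_def]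
    have sa: "summable (\<lambda>k. \<bar>a k\<bar>)"
      by (rule summable_comparison_test'[OF sb(1), where N = 0]) (use ab in auto)
    have "takagi s x - takagi s y = suminf a"
      unfolding takagi_def a_def q_def using summable_takagi[OF s, of x] summable_takagi[OF s, of y]
      by (simp add: suminf_diff[symmetric] right_diff_distrib)
    then have "\<bar>takagi s x - takagi s y\<bar> \<le> (\<Sum>k. \<bar>a k\<bar>)" using summable_rabs[OF sa] by simp
    also have "\<dots> \<le> suminf b" by (rule suminf_le[OF ab sa sb(1)])
    also have "\<dots> \<le> q ^ N * (1 / (2 * q - 1) + 1 / (1 - q))" by (rule sb(2))
    also have "\<dots> \<le> (2 powr s * d powr s) * (1 / (2 * q - 1) + 1 / (1 - q))"
    proof (rule mult_right_mono)
      have "q ^ N = (1 / 2 ^ N) powr s" unfolding q_def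
        by (simp add: powr_power powr_divide powr_realpow[symmetric] powr_powr powr_minus_divide mult.commute)
      also have "\<dots> \<le> (2 * d) powr s" using N(2) s by (intro powr_mono2) (auto simp: field_simps)
      finally show "q ^ N \<le> 2 powr s * d powr s" using d by (simp add: powr_mult)
    qed (use q in simp)
    also have "\<dots> = C * \<bar>x - y\<bar> powr s" unfolding C_def d_def by simp
    finally show ?thesis .
  qed simp
qed

lemma continuous_on_takagi:
  assumes s: "0 < s" "s < 1"
  shows "continuous_on A (takagi s)"
proof -
  obtain C where "0 \<le> C"
    and C: "\<And>x y. \<bar>x - y\<bar> \<le> 1 \<Longrightarrow> \<bar>takagi s x - takagi s y\<bar> \<le> C * \<bar>x - y\<bar> powr s"
    using takagi_holder[OF s] by blast
  have "isCont (takagi s) x" for x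
  proof -
    have "\<forall>\<^sub>F y in at x. dist y x < 1" unfolding eventually_at by (intro exI[of _ 1]) auto
    then have near: "\<forall>\<^sub>F y in at x. norm (takagi s y - takagi s x) \<le> C * \<bar>y - x\<bar> powr s"
      by eventually_elim (simp add: C dist_real_def)
    have "((\<lambda>y. \<bar>y - x\<bar>) \<longlongrightarrow> 0) (at x)"
      using tendsto_rabs_zero[OF LIM_zero[OF tendsto_ident_at[of x UNIV]]] by simp
    then have "((\<lambda>y. C * \<bar>y - x\<bar> powr s) \<longlongrightarrow> C * 0) (at x)"
      using s by (intro tendsto_mult tendsto_const tendsto_zero_powrI) auto
    then have "((\<lambda>y. C * \<bar>y - x\<bar> powr s) \<longlongrightarrow> 0) (at x)" by simp
    with near have "((\<lambda>y. takagi s y - takagi s x) \<longlongrightarrow> 0) (at x)" by (rule Lim_null_comparison)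
    then show ?thesis unfolding isCont_def by (rule LIM_zero_cancel)
  qed
  then show ?thesis by (simp add: continuous_at_imp_continuous_on)
qed

lemma takagi_dyadic_second_difference:
  fixes j n :: nat
  assumes s: "0 < s" "s < 1"
  shows "takagi s (real j / 2 ^ n) + takagi s ((real j + 1) / 2 ^ n)
      - 2 * takagi s ((2 * real j + 1) / 2 ^ (n + 1)) = (2 powr - s) ^ n"
proof -
  define a b m where "a = real j / 2 ^ n" and "b = (real j + 1) / 2 ^ n"
    and "m = (2 * real j + 1) / 2 ^ (n + 1)"
  let ?t = "\<lambda>x k. (2 powr - s) ^ k * tent (2 ^ k * x)"
  have "(\<lambda>k. ?t a k + ?t b k - 2 * ?t m k) sums (takagi s a + takagi s b - 2 * takagi s m)"
    unfolding takagi_def by (intro sums_diff sums_add sums_mult summable_sums summable_takagi[OF s])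
  moreover have "(\<lambda>k. ?t a k + ?t b k - 2 * ?t m k) = (\<lambda>k. if k = n then (2 powr - s) ^ k else 0)"
  proof
    fix k
    have "?t a k + ?t b k - 2 * ?t m k
        = (2 powr - s) ^ k * (tent (2 ^ k * a) + tent (2 ^ k * b) - 2 * tent (2 ^ k * m))"
      by (simp add: algebra_simps)
    then show "?t a k + ?t b k - 2 * ?t m k = (if k = n then (2 powr - s) ^ k else 0)"
      unfolding a_def b_def m_def tent_dyadic_second_difference by simp
  qed
  ultimately have "(\<lambda>k. if k = n then (2 powr - s) ^ k else 0) sums (takagi s a + takagi s b - 2 * takagi s m)"
    by simp
  then show ?thesis unfolding a_def b_def m_def using sums_single sums_unique2 by blast
qed

lemma oscillation_sum_takagi_ge:
  assumes s: "0 < s" "s < 1"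
  shows "2 ^ n * (2 powr - s) ^ n / 2 \<le> oscillation_sum (\<lambda>x. c + takagi s x) (1 / 2 ^ n)"
proof -
  define h where "h x = c + takagi s x" for x
  define w :: real where "w = 1 / 2 ^ n"
  have hc: "continuous_on {0..1} h" unfolding h_def by (intro continuous_intros continuous_on_takagi[OF s])
  have osc: "(2 powr - s) ^ n / 2 \<le> diameter (h ` column w i)" if i: "i < 2 ^ n" for i
  proof -
    define a b m where "a = real i / 2 ^ n" and "b = (real i + 1) / 2 ^ n"
      and "m = (2 * real i + 1) / 2 ^ (n + 1)"
    have "i + 1 \<le> 2 ^ n" using i by simp
    then have "real (i + 1) \<le> real (2 ^ n)" by (simp only: of_nat_le_iff)
    then have "a \<le> m" "m \<le> b" "0 \<le> a" "b \<le> 1" unfolding a_def b_def m_def by (auto simp: field_simps)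
    moreover have "column w i = {a..b} \<inter> {0..1}" unfolding column_def w_def a_def b_def by (simp add: field_simps)
    ultimately have "h a \<in> h ` column w i" "h b \<in> h ` column w i" "h m \<in> h ` column w i" by auto
    then have "\<bar>h a - h m\<bar> \<le> diameter (h ` column w i)" "\<bar>h b - h m\<bar> \<le> diameter (h ` column w i)"
      using diameter_bounded_bound[OF bounded_image_column[OF hc]] by (auto simp: dist_real_def)
    moreover have "h a + h b - 2 * h m = (2 powr - s) ^ n"
      unfolding h_def a_def b_def m_def using takagi_dyadic_second_difference[OF s, of i n] by simp
    ultimately show ?thesis by linarith
  qed
  have "num_columns w = 2 ^ n + 1" unfolding num_columns_def w_def by simp
  then have "{..<(2::nat) ^ n} \<subseteq> {..<num_columns w}" by auto
  then have "(\<Sum>i<(2::nat) ^ n. diameter (h ` column w i)) \<le> oscillation_sum h w"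
    unfolding oscillation_sum_def
    by (intro sum_mono2) (auto intro: diameter_ge_0 bounded_image_column[OF hc])
  moreover have "(\<Sum>i<(2::nat) ^ n. (2 powr - s) ^ n / 2) \<le> (\<Sum>i<(2::nat) ^ n. diameter (h ` column w i))"
    by (rule sum_mono) (rule osc, simp)
  ultimately show ?thesis unfolding h_def w_def by simp
qed

lemma upper_box_dim_takagi_graph:
  assumes s: "0 < s" "s < 1"
  shows "upper_box_dim (graph01 (\<lambda>x. c + takagi s x)) = ereal (2 - s)"
proof (rule antisym)
  define h where "h x = c + takagi s x" for x
  have hc: "continuous_on {0..1} h" unfolding h_def by (intro continuous_intros continuous_on_takagi[OF s])
  obtain C where "0 \<le> C"
    and C: "\<And>x y. \<bar>x - y\<bar> \<le> 1 \<Longrightarrow> \<bar>takagi s x - takagi s y\<bar> \<le> C * \<bar>x - y\<bar> powr s"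
    using takagi_holder[OF s] by blast
  show "upper_box_dim (graph01 (\<lambda>x. c + takagi s x)) \<le> ereal (2 - s)"
    using hc s \<open>0 \<le> C\<close> C unfolding h_def by (intro upper_box_dim_graph_holder) auto
  show "ereal (2 - s) \<le> upper_box_dim (graph01 (\<lambda>x. c + takagi s x))"
  proof (rule upper_box_dim_ge_sequence[of "1 / 48" "\<lambda>n. 2 / 2 ^ n"])
    show "(\<lambda>n. 2 / 2 ^ n :: real) \<longlonglongrightarrow> 0"
      by (intro tendsto_divide_0[OF tendsto_const] filterlim_realpow_sequentially_gt1) simp
    fix n :: nat
    define P :: real where "P = 2 ^ n"
    define q :: real where "q = 2 powr - s"
    have P: "1 \<le> P" unfolding P_def by simp
    have "P * q ^ n / 2 \<le> oscillation_sum h (1 / P)"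
      using oscillation_sum_takagi_ge[OF s, of n c] unfolding P_def q_def h_def .
    also have "\<dots> \<le> 24 * (1 / P) * graph_cover_number h (2 / P)"
      using graph_cover_number_oscillation_bounds(1)[OF hc, of "1 / P"] P by simp
    finally have N: "P * P * q ^ n / 48 \<le> graph_cover_number h (2 / P)"
      using P by (simp add: field_simps)
    have "q ^ n = 2 powr (real n * - s)" unfolding q_def by (rule powr_power) simp
    also have "\<dots> = 1 / 2 powr (real n * s)" by (simp add: powr_minus_divide)
    also have "2 powr (real n * s) = P powr s" unfolding P_def by (simp add: powr_realpow[symmetric] powr_powr)
    finally have "q ^ n = 1 / P powr s" .
    have "(2 / P) powr - (2 - s) = 1 / (2 / P) powr (2 - s)" by (rule powr_minus_divide)
    also have "\<dots> = (P / 2) powr (2 - s)" using P by (simp add: powr_divide)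
    also have "\<dots> \<le> P powr (2 - s)" using P s by (intro powr_mono2) auto
    also have "\<dots> = P * P * q ^ n"
      using P \<open>q ^ n = 1 / P powr s\<close> by (simp add: powr_diff power2_eq_square flip: powr_realpow)
    finally have "(2 / P) powr - (2 - s) \<le> P * P * q ^ n" .
    then show "1 / 48 * (2 / 2 ^ n) powr - (2 - s) \<le> graph_cover_number (\<lambda>x. c + takagi s x) (2 / 2 ^ n)"
      using N unfolding P_def h_def by simp
  qed auto
qed

section \<open>Factorisation\<close>

lemma continuous_on_01_bounded:
  fixes u :: "real \<Rightarrow> real"
  assumes "continuous_on {0..1} u"
  obtains M where "0 \<le> M" "\<And>x. x \<in> {0..1} \<Longrightarrow> \<bar>u x\<bar> \<le> M"
proof -
  have "bounded (u ` {0..1})" using assms by (intro compact_imp_bounded compact_continuous_image) auto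
  then obtain M where "\<forall>y\<in>u ` {0..1}. norm y \<le> M" unfolding bounded_iff by blast
  then show ?thesis by (intro that[of "max M 0"]) force+
qed

text \<open>A Hoelder bound with exponent 0; as 0 powr 0 = 0 in Isabelle, it only has to hold off the
  diagonal.\<close>
lemma upper_box_dim_graph_le_2:
  assumes "continuous_on {0..1} u"
  shows "upper_box_dim (graph01 u) \<le> 2"
proof -
  obtain M where M: "0 \<le> M" "\<And>x. x \<in> {0..1} \<Longrightarrow> \<bar>u x\<bar> \<le> M"
    using continuous_on_01_bounded[OF assms] by blast
  have "\<bar>u x - u y\<bar> \<le> 2 * M * \<bar>x - y\<bar> powr 0" if "x \<in> {0..1}" "y \<in> {0..1}" for x y
    using M(2)[OF that(1)] M(2)[OF that(2)] by (cases "x = y") auto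
  then have "upper_box_dim (graph01 u) \<le> ereal (2 - 0)"
    using assms M(1) by (intro upper_box_dim_graph_holder[where C = "2 * M"]) auto
  then show ?thesis by simp
qed

lemma exists_graph_with_upper_box_dim:
  assumes "1 \<le> \<beta>" "\<beta> < 2"
  obtains h where "continuous_on {0..1} h" "\<And>x. 1 \<le> h x" "upper_box_dim (graph01 h) = ereal \<beta>"
proof (cases "\<beta> = 1")
  case True
  have "upper_box_dim (graph01 (\<lambda>_. 1)) \<le> ereal (2 - 1)"
    by (intro upper_box_dim_graph_holder[of _ 1 0]) auto
  moreover have "1 \<le> upper_box_dim (graph01 (\<lambda>_. 1))" by (intro upper_box_dim_graph_ge_1) simp
  ultimately show ?thesis using that[of "\<lambda>_. 1"] True by (simp add: one_ereal_def)
next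
  case False
  then have s: "0 < 2 - \<beta>" "2 - \<beta> < 1" using assms by auto
  show ?thesis
  proof (rule that)
    show "continuous_on {0..1} (\<lambda>x. 1 + takagi (2 - \<beta>) x)"
      by (intro continuous_intros continuous_on_takagi[OF s])
    show "1 \<le> 1 + takagi (2 - \<beta>) x" for x using takagi_nonneg[OF s] by simp
    show "upper_box_dim (graph01 (\<lambda>x. 1 + takagi (2 - \<beta>) x)) = ereal \<beta>"
      using upper_box_dim_takagi_graph[OF s] by simp
  qed
qed

lemma abs_diff_divide_le:
  fixes a b c d M :: real
  assumes "1 \<le> c" "1 \<le> d" "\<bar>b\<bar> \<le> M"
  shows "\<bar>a / c - b / d\<bar> \<le> \<bar>a - b\<bar> + M * \<bar>c - d\<bar>"
proof -
  have "a / c - b / d = (a - b) / c + b * (d - c) / (c * d)"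
    using assms by (simp add: field_simps)
  then have "\<bar>a / c - b / d\<bar> \<le> \<bar>a - b\<bar> / c + \<bar>b\<bar> * \<bar>c - d\<bar> / (c * d)"
    using assms abs_triangle_ineq[of "(a - b) / c" "b * (d - c) / (c * d)"]
    by (simp add: abs_mult abs_minus_commute)
  also have "\<dots> \<le> \<bar>a - b\<bar> / 1 + \<bar>b\<bar> * \<bar>c - d\<bar> / 1"
    using assms mult_mono[of 1 c 1 d] by (intro add_mono divide_left_mono) auto
  also have "\<dots> \<le> \<bar>a - b\<bar> + M * \<bar>c - d\<bar>" using assms(3) by (simp add: mult_right_mono)
  finally show ?thesis .
qed

lemma abs_diff_mult_le:
  fixes a b c d G H :: real
  assumes "\<bar>c\<bar> \<le> H" "\<bar>b\<bar> \<le> G"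
  shows "\<bar>a * c - b * d\<bar> \<le> H * \<bar>a - b\<bar> + G * \<bar>c - d\<bar>"
proof -
  have "a * c - b * d = c * (a - b) + b * (c - d)" by (simp add: algebra_simps)
  then have "\<bar>a * c - b * d\<bar> \<le> \<bar>c\<bar> * \<bar>a - b\<bar> + \<bar>b\<bar> * \<bar>c - d\<bar>"
    by (metis abs_mult abs_triangle_ineq)
  also have "\<dots> \<le> H * \<bar>a - b\<bar> + G * \<bar>c - d\<bar>"
    using assms by (intro add_mono mult_right_mono) auto
  finally show ?thesis .
qed

lemma upper_box_dim_graph_divide:
  assumes f: "continuous_on {0..1} f" and h: "continuous_on {0..1} h" "\<And>x. 1 \<le> h x"
    and less: "upper_box_dim (graph01 h) < upper_box_dim (graph01 f)"
  shows "upper_box_dim (graph01 (\<lambda>x. f x / h x)) = upper_box_dim (graph01 f)"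
proof -
  define g where "g x = f x / h x" for x
  have "h x \<noteq> 0" for x using h(2)[of x] by auto
  then have g: "continuous_on {0..1} g" unfolding g_def using f h(1) by (intro continuous_on_divide) auto
  obtain M where "0 \<le> M" "\<And>x. x \<in> {0..1} \<Longrightarrow> \<bar>f x\<bar> \<le> M"
    using continuous_on_01_bounded[OF f] by blast
  then have g_le: "upper_box_dim (graph01 g) \<le> max (upper_box_dim (graph01 f)) (upper_box_dim (graph01 h))"
    using g f h(1) by (intro upper_box_dim_graph_le_max[of _ _ _ 1 M]) (auto simp: g_def intro!: abs_diff_divide_le h(2))
  obtain G H where G: "\<And>x. x \<in> {0..1} \<Longrightarrow> \<bar>g x\<bar> \<le> G"
    and H: "\<And>x. x \<in> {0..1} \<Longrightarrow> \<bar>h x\<bar> \<le> H" and "0 \<le> G" "0 \<le> H"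
    using continuous_on_01_bounded[OF g] continuous_on_01_bounded[OF h(1)] by metis
  have "\<bar>f x - f y\<bar> \<le> H * \<bar>g x - g y\<bar> + G * \<bar>h x - h y\<bar>" if "x \<in> {0..1}" "y \<in> {0..1}" for x y
    using abs_diff_mult_le[where a = "g x" and b = "g y" and c = "h x" and d = "h y", OF H G] that
      \<open>\<And>x. h x \<noteq> 0\<close> by (simp add: g_def)
  then have "upper_box_dim (graph01 f) \<le> max (upper_box_dim (graph01 g)) (upper_box_dim (graph01 h))"
    using g f h(1) \<open>0 \<le> G\<close> \<open>0 \<le> H\<close> by (intro upper_box_dim_graph_le_max)
  with g_le less show ?thesis unfolding g_def by (auto simp: max_def split: if_splits)
qed

theorem theorem3p10:
  fixes f :: "real \<Rightarrow> real" and \<alpha> :: ereal and \<beta> :: real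
  assumes "continuous_on {0..1} f"
    and "\<forall>x\<in>{0..1}. f x \<noteq> 0"
    and "\<alpha> = upper_box_dim (graph01 f)"
    and "1 \<le> \<beta>" and "ereal \<beta> < \<alpha>"
  shows "\<exists>g h :: real \<Rightarrow> real. continuous_on {0..1} g \<and> continuous_on {0..1} h \<and>
           (\<forall>x\<in>{0..1}. f x = g x * h x) \<and>
           upper_box_dim (graph01 g) = \<alpha> \<and> upper_box_dim (graph01 h) = ereal \<beta>"
proof -
  have "ereal \<beta> < 2"
    using assms(5) upper_box_dim_graph_le_2[OF assms(1)] unfolding assms(3) by (rule less_le_trans)
  then obtain h where h: "continuous_on {0..1} h" "\<And>x. 1 \<le> h x" "upper_box_dim (graph01 h) = ereal \<beta>"
    using exists_graph_with_upper_box_dim[OF assms(4)] by auto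
  have "h x \<noteq> 0" for x using h(2)[of x] by auto
  then have "continuous_on {0..1} (\<lambda>x. f x / h x)" "\<forall>x\<in>{0..1}. f x = f x / h x * h x"
    using assms(1) h(1) by (auto intro: continuous_on_divide)
  moreover have "upper_box_dim (graph01 (\<lambda>x. f x / h x)) = \<alpha>"
    using upper_box_dim_graph_divide[OF assms(1) h(1,2)] h(3) assms(3,5) by simp
  ultimately show ?thesis using h(1,3) by blast
qed

end
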